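(* Let $\eta,\varepsilon,\alpha_1,\alpha_2\in\mathbb R$. Let $\phi_h,u_h,v_h,w_h$ be continuously differentiable in $t$ with values in $V_h$ and satisfy, for every $j$ and all $\varphi_1,\dots,\varphi_4\in V_h$, $$\tfrac12\int_{I_j}\partial_tu_h\varphi_1dx-\int_{I_j}w_h\partial_x\varphi_1dx+(\widehat{w_h}\varphi_1^-)_{j+\frac12}-(\widehat{w_h}\varphi_1^+)_{j-\frac12}=0,$$ $$-\tfrac12\int_{I_j}\partial_t\phi_h\varphi_2dx+\varepsilon\Big(\int_{I_j}v_h\partial_x\varphi_2dx-(\widehat{v_h}\varphi_2^-)_{j+\frac12}+(\widehat{v_h}\varphi_2^+)_{j-\frac12}\Big)=\int_{I_j}\big(-w_h+\tfrac\eta2u_h^2\big)\varphi_2dx,$$ $$\varepsilon\Big(-\int_{I_j}u_h\partial_x\varphi_3dx+(\widehat{u_h}\varphi_3^-)_{j+\frac12}-(\widehat{u_h}\varphi_3^+)_{j-\frac12}\Big)=\int_{I_j}v_h\varphi_3dx,$$ $$\int_{I_j}\phi_h\partial_x\varphi_4dx-(\widehat{\phi_h}\varphi_4^-)_{j+\frac12}+(\widehat{\phi_h}\varphi_4^+)_{j-\frac12}=-\int_{I_j}u_h\varphi_4dx,$$ with interface fluxes $\widehat{w_h}=\{w_h\}+\alpha_1[w_h]$, $\widehat{v_h}=\{v_h\}-\alpha_2[v_h]$, $\widehat{u_h}=\{u_h\}+\alpha_2[u_h]$, $\widehat{\phi_h}=\{\phi_h\}-\alpha_1[\phi_h]$.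 Then the discrete energy $$\mathcal E_h=\int_\Omega\Big(\tfrac\eta6u_h^3-\tfrac12v_h^2\Big)dx$$ is constant in time.
   Context: This is a DG discretization of the KdV equation $u_t+\eta uu_x+\varepsilon^2u_{xxx}=0$ in the multi-symplectic form $\frac12u_t+w_x=0$, $-\frac12\phi_t-\varepsilon v_x=-w+\frac\eta2u^2$, $\varepsilon u_x=v$, $-\phi_x=-u$. Mesh and spaces: a one-dimensional domain $\Omega$ is partitioned into cells $I_j=[x_{j-1/2},x_{j+1/2}]$, $j=1,\dots,N$, with periodic boundary conditions (interface indices modulo $N$). For fixed $k\ge0$, $V_h=\{v\in L^2(\Omega): v|_{I_j}\text{ is a polynomial of degree}\le k\ \forall j\}$. For $v\in V_h$, $v^\pm_{j+1/2}$ are its right/left limits at $x_{j+1/2}$, $\{v\}=\frac12(v^++v^-)$, $[v]=v^+-v^-$; subscript $j\pm\frac12$ denotes evaluation at $x_{j\pm1/2}$. *)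

theory Defs
  imports "HOL-Analysis.Analysis" "HOL-Computational_Algebra.Polynomial"
begin

text \<open>Mesh: nodes x 0 < x 1 < ... < x N; cell j (0 \<le> j < N) is [x j, x (Suc j)].
  The interface to the right of cell j is x (Suc j); periodicity identifies x N with x 0,
  so the right neighbour of cell j is cell (Suc j mod N).
  An element of V_h is represented by its cell polynomials v :: nat \<Rightarrow> real poly.\<close>

definition in_Vh :: "nat \<Rightarrow> nat \<Rightarrow> (nat \<Rightarrow> real poly) \<Rightarrow> bool" where
  "in_Vh N k v \<longleftrightarrow> (\<forall>j<N. degree (v j) \<le> k)"

definition cint :: "(nat \<Rightarrow> real) \<Rightarrow> nat \<Rightarrow> (real \<Rightarrow> real) \<Rightarrow> real" where
  "cint x j f = integral {x j..x (Suc j)} f"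

definition tr_minus :: "(nat \<Rightarrow> real) \<Rightarrow> (nat \<Rightarrow> real poly) \<Rightarrow> nat \<Rightarrow> real" where
  "tr_minus x v j = poly (v j) (x (Suc j))"

definition tr_plus :: "nat \<Rightarrow> (nat \<Rightarrow> real) \<Rightarrow> (nat \<Rightarrow> real poly) \<Rightarrow> nat \<Rightarrow> real" where
  "tr_plus N x v j = poly (v (Suc j mod N)) (x (Suc j mod N))"

definition flux :: "nat \<Rightarrow> (nat \<Rightarrow> real) \<Rightarrow> real \<Rightarrow> (nat \<Rightarrow> real poly) \<Rightarrow> nat \<Rightarrow> real" where
  "flux N x a v j = (tr_plus N x v j + tr_minus x v j) / 2 + a * (tr_plus N x v j - tr_minus x v j)"

text \<open>Index of the left neighbour cell (periodic); its right interface is the left interface of j.\<close>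
definition prev_cell :: "nat \<Rightarrow> nat \<Rightarrow> nat" where
  "prev_cell N j = (j + N - 1) mod N"

definition C1_Vh :: "nat \<Rightarrow> nat \<Rightarrow> real set \<Rightarrow> (real \<Rightarrow> nat \<Rightarrow> real poly) \<Rightarrow> (real \<Rightarrow> nat \<Rightarrow> real poly) \<Rightarrow> bool" where
  "C1_Vh N k T v vt \<longleftrightarrow>
     (\<forall>t\<in>T. in_Vh N k (v t) \<and> in_Vh N k (vt t)) \<and>
     (\<forall>j<N. \<forall>i. (\<forall>t\<in>T. ((\<lambda>s. coeff (v s j) i) has_real_derivative coeff (vt t j) i) (at t within T))
                \<and> continuous_on T (\<lambda>s. coeff (vt s j) i))"

definition energy :: "nat \<Rightarrow> (nat \<Rightarrow> real) \<Rightarrow> real \<Rightarrow> (nat \<Rightarrow> real poly) \<Rightarrow> (nat \<Rightarrow> real poly) \<Rightarrow> real" where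
  "energy N x \<eta> u v = (\<Sum>j<N. cint x j (\<lambda>y. \<eta> / 6 * poly (u j) y ^ 3 - 1/2 * poly (v j) y ^ 2))"

end

theory Submission
  imports Defs
begin

text \<open>
  As for the continuous equation, dE/dt = \<integral> (\<eta>/2 u^2 u_t - v v_t). Testing the second equation
  with u_t, the first with \<phi>_t, and the time derivatives of the third and fourth with v and w
  turns this rate, cell by cell, into
  \<epsilon> (B(\<alpha>2; u_t, v) + B(-\<alpha>2; v, u_t)) - (B(\<alpha>1; w, \<phi>_t) + B(-\<alpha>1; \<phi>_t, w)),
  where B(a; f, g) is the DG form of \<integral> f g_x with flux {f} + a[f]. Integration by parts on a
  cell reduces B(a; f, g) + B(-a; g, f) to interface terms, and since the fluxes of f and g carry
  opposite parameters, these terms take the same value from both sides of each interface. Hence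
  they cancel over the periodic mesh.
\<close>

definition has_coeff_derivative ::
    "(real \<Rightarrow> real poly) \<Rightarrow> real poly \<Rightarrow> real filter \<Rightarrow> bool"
    (infix "has'_coeff'_derivative" 50) where
  "(f has_coeff_derivative f') F \<longleftrightarrow> (\<forall>i. ((\<lambda>s. coeff (f s) i) has_real_derivative coeff f' i) F)"

lemma has_coeff_derivative_diff:
  "(f has_coeff_derivative f') F \<Longrightarrow> (g has_coeff_derivative g') F \<Longrightarrow>
    ((\<lambda>s. f s - g s) has_coeff_derivative f' - g') F"
  unfolding has_coeff_derivative_def by (auto intro!: derivative_intros)

lemma has_coeff_derivative_smult:
  "(f has_coeff_derivative f') (at r within T) \<Longrightarrow>
    ((\<lambda>s. smult c (f s)) has_coeff_derivative smult c f') (at r within T)"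
  unfolding has_coeff_derivative_def by (simp add: DERIV_cmult)

lemma has_coeff_derivative_mult:
  assumes "(f has_coeff_derivative f') (at r within T)"
    and "(g has_coeff_derivative g') (at r within T)"
  shows "((\<lambda>s. f s * g s) has_coeff_derivative f' * g r + f r * g') (at r within T)"
  unfolding has_coeff_derivative_def
proof
  fix n
  have "((\<lambda>s. \<Sum>i\<le>n. coeff (f s) i * coeff (g s) (n - i)) has_real_derivative
      (\<Sum>i\<le>n. coeff f' i * coeff (g r) (n - i) + coeff (f r) i * coeff g' (n - i))) (at r within T)"
    using assms unfolding has_coeff_derivative_def
    by (intro DERIV_sum) (auto intro!: derivative_eq_intros)
  then show "((\<lambda>s. coeff (f s * g s) n) has_real_derivative coeff (f' * g r + f r * g') n)
      (at r within T)"
    by (simp add: coeff_mult sum.distrib)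
qed

lemma has_coeff_derivative_power:
  assumes "(f has_coeff_derivative f') (at r within T)"
  shows "((\<lambda>s. f s ^ Suc n) has_coeff_derivative of_nat (Suc n) * f r ^ n * f') (at r within T)"
proof (induction n)
  case 0
  then show ?case using assms by simp
next
  case (Suc n)
  have "((\<lambda>s. f s * f s ^ Suc n) has_coeff_derivative
      f' * f r ^ Suc n + f r * (of_nat (Suc n) * f r ^ n * f')) (at r within T)"
    by (rule has_coeff_derivative_mult[OF assms Suc])
  moreover have "f' * f r ^ Suc n + f r * (of_nat (Suc n) * f r ^ n * f')
      = of_nat (Suc (Suc n)) * f r ^ Suc n * f'"
    by (simp add: algebra_simps)
  ultimately show ?case by simp
qed

lemma linear_poly_functional_expand:
  fixes \<Phi> :: "real poly \<Rightarrow> real"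
  assumes add: "\<And>p q. \<Phi> (p + q) = \<Phi> p + \<Phi> q" and smult: "\<And>c p. \<Phi> (smult c p) = c * \<Phi> p"
    and "degree p \<le> D"
  shows "\<Phi> p = (\<Sum>i\<le>D. coeff p i * \<Phi> (monom 1 i))"
proof -
  have sum: "\<Phi> (\<Sum>i\<in>A. g i) = (\<Sum>i\<in>A. \<Phi> (g i))" if "finite A" for g :: "nat \<Rightarrow> real poly" and A
    using that
  proof (induction A rule: finite_induct)
    case empty
    show ?case using smult[of 0 0] by simp
  qed (simp add: add)
  have "\<Phi> p = \<Phi> (\<Sum>i\<le>D. smult (coeff p i) (monom 1 i))"
    using poly_as_sum_of_monoms'[OF assms(3)] by (simp add: smult_monom)
  then show ?thesis by (simp add: sum smult)
qed

lemma linear_poly_functional_has_derivative: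
  fixes \<Phi> :: "real poly \<Rightarrow> real"
  assumes add: "\<And>p q. \<Phi> (p + q) = \<Phi> p + \<Phi> q" and smult: "\<And>c p. \<Phi> (smult c p) = c * \<Phi> p"
    and f': "(f has_coeff_derivative f') (at r within T)"
    and deg: "\<And>s. s \<in> T \<Longrightarrow> degree (f s) \<le> D" "degree f' \<le> D" and "r \<in> T"
  shows "((\<lambda>s. \<Phi> (f s)) has_real_derivative \<Phi> f') (at r within T)"
proof -
  note expand = linear_poly_functional_expand[OF add smult]
  have "((\<lambda>s. \<Sum>i\<le>D. coeff (f s) i * \<Phi> (monom 1 i)) has_real_derivative \<Phi> f') (at r within T)"
    using f' unfolding expand[OF deg(2)] has_coeff_derivative_def
    by (intro DERIV_sum DERIV_cmult_right) auto
  then show ?thesis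
    by (rule has_field_derivative_transform_within[OF _ zero_less_one \<open>r \<in> T\<close>])
      (metis expand deg(1))
qed

lemma has_field_derivative_unique_on:
  fixes f g :: "'a :: real_normed_field \<Rightarrow> 'a"
  assumes "(f has_field_derivative f') (at r within T)"
    and "(g has_field_derivative g') (at r within T)"
    and "\<And>s. s \<in> T \<Longrightarrow> f s = g s" "r \<in> T" "r islimpt T"
  shows "f' = g'"
proof -
  have "(f has_field_derivative g') (at r within T)"
    using assms(2) by (rule has_field_derivative_transform_within[OF _ zero_less_one assms(4)])
      (simp add: assms(3))
  then show ?thesis
    using assms(1,5) has_field_derivative_unique trivial_limit_within by blast
qed

lemma integrable_on_poly: "poly p integrable_on {a..b :: real}"
  by (intro integrable_continuous_real continuous_intros)

lemma cint_poly_add: "cint x j (poly (p + q)) = cint x j (poly p) + cint x j (poly q)"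
  unfolding cint_def poly_add[abs_def] by (simp add: integral_add integrable_on_poly)

lemma cint_poly_smult: "cint x j (poly (smult c p)) = c * cint x j (poly p)"
  unfolding cint_def poly_smult[abs_def] by simp

lemma cint_poly_diff: "cint x j (poly (p - q)) = cint x j (poly p) - cint x j (poly q)"
  unfolding cint_def poly_diff[abs_def] by (simp add: integral_diff integrable_on_poly)

lemma cint_poly_mult: "cint x j (\<lambda>y. poly p y * poly q y) = cint x j (poly (p * q))"
  by (simp add: poly_mult[abs_def])

lemma cint_poly_pderiv:
  assumes "x j \<le> x (Suc j)"
  shows "cint x j (poly (pderiv p)) = poly p (x (Suc j)) - poly p (x j)"
  unfolding cint_def
proof (rule integral_unique, rule fundamental_theorem_of_calculus[OF assms])
  fix y
  show "(poly p has_vector_derivative poly (pderiv p) y) (at y within {x j..x (Suc j)})"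
    by (simp add: has_real_derivative_iff_has_vector_derivative[symmetric] poly_DERIV
        has_field_derivative_at_within)
qed

lemma prev_cell_less: "N \<ge> 1 \<Longrightarrow> prev_cell N j < N"
  by (simp add: prev_cell_def)

lemma Suc_prev_cell_mod: "N \<ge> 1 \<Longrightarrow> j < N \<Longrightarrow> Suc (prev_cell N j) mod N = j"
  by (simp add: prev_cell_def mod_Suc_eq)

lemma prev_cell_Suc_mod:
  assumes "N \<ge> 1" "j < N"
  shows "prev_cell N (Suc j mod N) = j"
proof -
  have "Suc j mod N + N - 1 = Suc j mod N + (N - 1)" "Suc j + (N - 1) = j + N"
    using assms(1) by simp_all
  moreover have "(Suc j mod N + (N - 1)) mod N = (Suc j + (N - 1)) mod N"
    by (rule mod_add_left_eq)
  ultimately show ?thesis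
    using assms(2) by (simp add: prev_cell_def)
qed

lemma tr_plus_prev_cell: "N \<ge> 1 \<Longrightarrow> j < N \<Longrightarrow> tr_plus N x f (prev_cell N j) = poly (f j) (x j)"
  by (simp add: tr_plus_def Suc_prev_cell_mod)

lemma sum_prev_cell: "N \<ge> 1 \<Longrightarrow> (\<Sum>j<N. g (prev_cell N j)) = (\<Sum>j<N. g j)"
  by (rule sum.reindex_bij_witness[where i = "\<lambda>j. Suc j mod N" and j = "prev_cell N"])
    (auto simp: prev_cell_less Suc_prev_cell_mod prev_cell_Suc_mod)

definition dg_form ::
    "nat \<Rightarrow> (nat \<Rightarrow> real) \<Rightarrow> real \<Rightarrow> (nat \<Rightarrow> real poly) \<Rightarrow> nat \<Rightarrow> real poly \<Rightarrow> real"
  where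
  "dg_form N x a f j q = cint x j (\<lambda>y. poly (f j) y * poly (pderiv q) y)
     - flux N x a f j * poly q (x (Suc j)) + flux N x a f (prev_cell N j) * poly q (x j)"

definition dg_interface ::
    "nat \<Rightarrow> (nat \<Rightarrow> real) \<Rightarrow> real \<Rightarrow> (nat \<Rightarrow> real poly) \<Rightarrow> (nat \<Rightarrow> real poly) \<Rightarrow> nat \<Rightarrow> real"
  where
  "dg_interface N x a f g i = tr_minus x f i * tr_minus x g i
     - flux N x a f i * tr_minus x g i - flux N x (- a) g i * tr_minus x f i"

text \<open>The fluxes F = {f} + a[f] and G = {g} - a[g] satisfy F[g] + G[f] = [f g].\<close>

lemma dg_interface_tr_plus:
  "dg_interface N x a f g i = tr_plus N x f i * tr_plus N x g i
     - flux N x a f i * tr_plus N x g i - flux N x (- a) g i * tr_plus N x f i"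
  unfolding dg_interface_def flux_def by (simp add: field_simps)

lemma dg_form_skew_cell:
  assumes N: "N \<ge> 1" and j: "j < N" and mesh: "x j \<le> x (Suc j)"
  shows "dg_form N x a f j (g j) + dg_form N x (- a) g j (f j)
    = dg_interface N x a f g j - dg_interface N x a f g (prev_cell N j)"
proof -
  have "cint x j (\<lambda>y. poly (f j) y * poly (pderiv (g j)) y)
      + cint x j (\<lambda>y. poly (g j) y * poly (pderiv (f j)) y)
      = cint x j (poly (pderiv (f j * g j)))"
    by (simp add: cint_poly_mult cint_poly_add[symmetric] pderiv_mult algebra_simps)
  also have "\<dots> = poly (f j * g j) (x (Suc j)) - poly (f j * g j) (x j)"
    by (rule cint_poly_pderiv[OF mesh])
  finally show ?thesis
    unfolding dg_form_def dg_interface_def[of _ _ _ _ _ j]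
      dg_interface_tr_plus[of _ _ _ _ _ "prev_cell N j"] tr_plus_prev_cell[OF N j]
    by (simp add: tr_minus_def algebra_simps)
qed

lemma dg_form_skew_sum:
  assumes N: "N \<ge> 1" and mesh: "\<forall>j<N. x j < x (Suc j)"
  shows "(\<Sum>j<N. dg_form N x a f j (g j) + dg_form N x (- a) g j (f j)) = 0"
proof -
  have "(\<Sum>j<N. dg_form N x a f j (g j) + dg_form N x (- a) g j (f j))
      = (\<Sum>j<N. dg_interface N x a f g j) - (\<Sum>j<N. dg_interface N x a f g (prev_cell N j))"
    using mesh by (simp add: dg_form_skew_cell[OF N] less_imp_le sum_subtractf)
  then show ?thesis
    by (simp add: sum_prev_cell[OF N])
qed

lemma C1_Vh_in_Vh: "C1_Vh N k T f f' \<Longrightarrow> t \<in> T \<Longrightarrow> in_Vh N k (f t) \<and> in_Vh N k (f' t)"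
  unfolding C1_Vh_def by blast

lemma C1_Vh_degree: "C1_Vh N k T f f' \<Longrightarrow> t \<in> T \<Longrightarrow> j < N \<Longrightarrow> degree (f t j) \<le> k \<and> degree (f' t j) \<le> k"
  unfolding C1_Vh_def in_Vh_def by blast

lemma C1_Vh_has_coeff_derivative:
  "C1_Vh N k T f f' \<Longrightarrow> r \<in> T \<Longrightarrow> j < N \<Longrightarrow> ((\<lambda>s. f s j) has_coeff_derivative f' r j) (at r within T)"
  unfolding C1_Vh_def has_coeff_derivative_def by blast

lemma C1_Vh_linear_has_derivative:
  fixes \<Phi> :: "real poly \<Rightarrow> real"
  assumes "\<And>p q. \<Phi> (p + q) = \<Phi> p + \<Phi> q" "\<And>c p. \<Phi> (smult c p) = c * \<Phi> p"
    and "C1_Vh N k T f f'" "r \<in> T" "j < N"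
  shows "((\<lambda>s. \<Phi> (f s j)) has_real_derivative \<Phi> (f' r j)) (at r within T)"
  using assms C1_Vh_degree
  by (intro linear_poly_functional_has_derivative[where D = k] C1_Vh_has_coeff_derivative) auto

lemma C1_Vh_poly_has_derivative:
  "C1_Vh N k T f f' \<Longrightarrow> r \<in> T \<Longrightarrow> j < N \<Longrightarrow>
    ((\<lambda>s. poly (f s j) y) has_real_derivative poly (f' r j) y) (at r within T)"
  by (rule C1_Vh_linear_has_derivative[where \<Phi> = "\<lambda>p. poly p y"]) auto

lemma C1_Vh_cint_has_derivative:
  "C1_Vh N k T f f' \<Longrightarrow> r \<in> T \<Longrightarrow> j < N \<Longrightarrow>
    ((\<lambda>s. cint x j (\<lambda>y. poly (f s j) y * poly q y)) has_real_derivative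
      cint x j (\<lambda>y. poly (f' r j) y * poly q y)) (at r within T)"
  unfolding cint_poly_mult
  by (rule C1_Vh_linear_has_derivative[where \<Phi> = "\<lambda>p. cint x j (poly (p * q))"])
    (auto simp: distrib_right cint_poly_add cint_poly_smult)

lemma C1_Vh_flux_has_derivative:
  assumes "C1_Vh N k T f f'" "r \<in> T" "j < N"
  shows "((\<lambda>s. flux N x a (f s) j) has_real_derivative flux N x a (f' r) j) (at r within T)"
proof -
  have "Suc j mod N < N" using assms(3) by simp
  then show ?thesis
    unfolding flux_def tr_plus_def tr_minus_def using assms
    by (auto intro!: derivative_eq_intros C1_Vh_poly_has_derivative)
qed

lemma C1_Vh_dg_form_has_derivative:
  assumes "C1_Vh N k T f f'" "r \<in> T" "j < N" "N \<ge> 1"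
  shows "((\<lambda>s. dg_form N x a (f s) j q) has_real_derivative dg_form N x a (f' r) j q)
    (at r within T)"
  unfolding dg_form_def using assms prev_cell_less
  by (auto intro!: derivative_eq_intros C1_Vh_cint_has_derivative C1_Vh_flux_has_derivative)

lemma energy_has_derivative:
  assumes u: "C1_Vh N k T u u'" and v: "C1_Vh N k T v v'" and r: "r \<in> T"
  shows "((\<lambda>s. energy N x \<eta> (u s) (v s)) has_real_derivative
    (\<Sum>j<N. cint x j (poly (smult (\<eta> / 2) (u r j ^ 2 * u' r j) - v r j * v' r j)))) (at r within T)"
proof -
  define e where "e s j = smult (\<eta> / 6) (u s j ^ 3) - smult (1 / 2) (v s j ^ 2)" for s j
  define e' where "e' j = smult (\<eta> / 2) (u r j ^ 2 * u' r j) - v r j * v' r j" for j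
  have energy: "energy N x \<eta> (u s) (v s) = (\<Sum>j<N. cint x j (poly (e s j)))" for s
    unfolding energy_def e_def by (simp add: poly_diff[abs_def])
  have "((\<lambda>s. cint x j (poly (e s j))) has_real_derivative cint x j (poly (e' j))) (at r within T)"
    if j: "j < N" for j
  proof (rule linear_poly_functional_has_derivative[where D = "3 * k"])
    have "((\<lambda>s. e s j) has_coeff_derivative
        smult (\<eta> / 6) (3 * u r j ^ 2 * u' r j) - smult (1 / 2) (2 * v r j * v' r j))
        (at r within T)"
      unfolding e_def
      using has_coeff_derivative_power[OF C1_Vh_has_coeff_derivative[OF u r j], of 2]
        has_coeff_derivative_power[OF C1_Vh_has_coeff_derivative[OF v r j], of 1]
      by (intro has_coeff_derivative_diff has_coeff_derivative_smult)
        (simp_all add: power2_eq_square)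
    then show "((\<lambda>s. e s j) has_coeff_derivative e' j) (at r within T)"
      by (simp add: e'_def numeral_poly)
    show "degree (e s j) \<le> 3 * k" if "s \<in> T" for s
      using C1_Vh_degree[OF u that j] C1_Vh_degree[OF v that j] unfolding e_def
      by (intro degree_diff_le order.trans[OF degree_smult_le] order.trans[OF degree_power_le]) auto
    show "degree (e' j) \<le> 3 * k"
      using C1_Vh_degree[OF u r j] C1_Vh_degree[OF v r j] degree_power_le[of "u r j" 2]
      unfolding e'_def
      by (intro degree_diff_le order.trans[OF degree_smult_le] order.trans[OF degree_mult_le]) auto
  qed (rule cint_poly_add cint_poly_smult r)+
  then show ?thesis
    unfolding energy e'_def by (intro DERIV_sum) simp
qed

lemma dg_energy_has_derivative_zero:
  assumes N: "N \<ge> 1" and mesh: "\<forall>j<N. x j < x (Suc j)"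
    and ph: "C1_Vh N k T ph ph'" and u: "C1_Vh N k T u u'" and v: "C1_Vh N k T v v'"
    and w: "\<And>t. t \<in> T \<Longrightarrow> in_Vh N k (w t)"
    and r: "r \<in> T" "r islimpt T"
    and eq1: "\<And>t j \<phi>. t \<in> T \<Longrightarrow> j < N \<Longrightarrow> in_Vh N k \<phi> \<Longrightarrow>
      1/2 * cint x j (\<lambda>y. poly (u' t j) y * poly (\<phi> j) y) = dg_form N x \<alpha> (w t) j (\<phi> j)"
    and eq2: "\<And>t j \<phi>. t \<in> T \<Longrightarrow> j < N \<Longrightarrow> in_Vh N k \<phi> \<Longrightarrow>
      - 1/2 * cint x j (\<lambda>y. poly (ph' t j) y * poly (\<phi> j) y) + \<epsilon> * dg_form N x (- \<beta>) (v t) j (\<phi> j)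
        = cint x j (\<lambda>y. (- poly (w t j) y + \<eta> / 2 * poly (u t j) y ^ 2) * poly (\<phi> j) y)"
    and eq3: "\<And>t j \<phi>. t \<in> T \<Longrightarrow> j < N \<Longrightarrow> in_Vh N k \<phi> \<Longrightarrow>
      - \<epsilon> * dg_form N x \<beta> (u t) j (\<phi> j) = cint x j (\<lambda>y. poly (v t j) y * poly (\<phi> j) y)"
    and eq4: "\<And>t j \<phi>. t \<in> T \<Longrightarrow> j < N \<Longrightarrow> in_Vh N k \<phi> \<Longrightarrow>
      dg_form N x (- \<alpha>) (ph t) j (\<phi> j) = - cint x j (\<lambda>y. poly (u t j) y * poly (\<phi> j) y)"
  shows "((\<lambda>s. energy N x \<eta> (u s) (v s)) has_real_derivative 0) (at r within T)"
proof -
  have cell: "cint x j (poly (smult (\<eta> / 2) (u r j ^ 2 * u' r j) - v r j * v' r j))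
      = \<epsilon> * (dg_form N x \<beta> (u' r) j (v r j) + dg_form N x (- \<beta>) (v r) j (u' r j))
        - (dg_form N x \<alpha> (w r) j (ph' r j) + dg_form N x (- \<alpha>) (ph' r) j (w r j))"
    if j: "j < N" for j
  proof -
    have e1: "1/2 * cint x j (poly (u' r j * ph' r j)) = dg_form N x \<alpha> (w r) j (ph' r j)"
      using eq1[OF r(1) j] C1_Vh_in_Vh[OF ph r(1)] by (simp add: cint_poly_mult)
    have "(\<lambda>y. (- poly (w r j) y + \<eta> / 2 * poly (u r j) y ^ 2) * poly (u' r j) y)
        = poly (smult (\<eta> / 2) (u r j ^ 2 * u' r j) - u' r j * w r j)"
      by (simp add: fun_eq_iff algebra_simps)
    then have e2: "- 1/2 * cint x j (poly (ph' r j * u' r j))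
          + \<epsilon> * dg_form N x (- \<beta>) (v r) j (u' r j)
        = \<eta> / 2 * cint x j (poly (u r j ^ 2 * u' r j)) - cint x j (poly (u' r j * w r j))"
      using eq2[OF r(1) j] C1_Vh_in_Vh[OF u r(1)]
      by (simp add: cint_poly_mult cint_poly_diff cint_poly_smult)
    have e3: "- \<epsilon> * dg_form N x \<beta> (u' r) j (v r j) = cint x j (poly (v' r j * v r j))"
    proof (rule has_field_derivative_unique_on[OF _ _ _ r])
      show "((\<lambda>s. - \<epsilon> * dg_form N x \<beta> (u s) j (v r j)) has_real_derivative
          - \<epsilon> * dg_form N x \<beta> (u' r) j (v r j)) (at r within T)"
        by (intro DERIV_cmult C1_Vh_dg_form_has_derivative[OF u r(1) j N])
      show "((\<lambda>s. cint x j (\<lambda>y. poly (v s j) y * poly (v r j) y)) has_real_derivative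
          cint x j (poly (v' r j * v r j))) (at r within T)"
        using C1_Vh_cint_has_derivative[OF v r(1) j] by (simp add: cint_poly_mult)
    qed (use eq3 j C1_Vh_in_Vh[OF v r(1)] in blast)
    have e4: "dg_form N x (- \<alpha>) (ph' r) j (w r j) = - cint x j (poly (u' r j * w r j))"
    proof (rule has_field_derivative_unique_on[OF _ _ _ r])
      show "((\<lambda>s. dg_form N x (- \<alpha>) (ph s) j (w r j)) has_real_derivative
          dg_form N x (- \<alpha>) (ph' r) j (w r j)) (at r within T)"
        by (rule C1_Vh_dg_form_has_derivative[OF ph r(1) j N])
      show "((\<lambda>s. - cint x j (\<lambda>y. poly (u s j) y * poly (w r j) y)) has_real_derivative
          - cint x j (poly (u' r j * w r j))) (at r within T)"
        using C1_Vh_cint_has_derivative[OF u r(1) j] by (simp add: cint_poly_mult DERIV_minus)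
    qed (use eq4 j w[OF r(1)] in blast)
    show ?thesis
      using e1 e2 e3 e4 by (simp add: cint_poly_diff cint_poly_smult algebra_simps)
  qed
  have "(\<Sum>j<N. cint x j (poly (smult (\<eta> / 2) (u r j ^ 2 * u' r j) - v r j * v' r j)))
      = \<epsilon> * (\<Sum>j<N. dg_form N x \<beta> (u' r) j (v r j) + dg_form N x (- \<beta>) (v r) j (u' r j))
        - (\<Sum>j<N. dg_form N x \<alpha> (w r) j (ph' r j) + dg_form N x (- \<alpha>) (ph' r) j (w r j))"
    by (simp add: cell sum_subtractf sum_distrib_left)
  also have "\<dots> = 0"
    by (simp add: dg_form_skew_sum[OF N mesh])
  finally show ?thesis
    using energy_has_derivative[OF u v r(1), where x = x and \<eta> = \<eta>] by simp
qed


theorem proposition4p2: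
  fixes N k :: nat and x :: "nat \<Rightarrow> real" and T :: "real set"
    and \<eta> \<epsilon> \<alpha>1 \<alpha>2 :: real
    and ph u v w pht ut vt wt :: "real \<Rightarrow> nat \<Rightarrow> real poly"
  assumes N: "N \<ge> 1"
    and mesh: "\<forall>j<N. x j < x (Suc j)"
    and T: "is_interval T"
    and C1: "C1_Vh N k T ph pht" "C1_Vh N k T u ut" "C1_Vh N k T v vt" "C1_Vh N k T w wt"
    and eq1: "\<forall>t\<in>T. \<forall>j<N. \<forall>\<phi>. in_Vh N k \<phi> \<longrightarrow>
        1/2 * cint x j (\<lambda>y. poly (ut t j) y * poly (\<phi> j) y)
        - cint x j (\<lambda>y. poly (w t j) y * poly (pderiv (\<phi> j)) y)
        + flux N x \<alpha>1 (w t) j * poly (\<phi> j) (x (Suc j))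
        - flux N x \<alpha>1 (w t) (prev_cell N j) * poly (\<phi> j) (x j) = 0"
    and eq2: "\<forall>t\<in>T. \<forall>j<N. \<forall>\<phi>. in_Vh N k \<phi> \<longrightarrow>
        - 1/2 * cint x j (\<lambda>y. poly (pht t j) y * poly (\<phi> j) y)
        + \<epsilon> * (cint x j (\<lambda>y. poly (v t j) y * poly (pderiv (\<phi> j)) y)
                - flux N x (- \<alpha>2) (v t) j * poly (\<phi> j) (x (Suc j))
                + flux N x (- \<alpha>2) (v t) (prev_cell N j) * poly (\<phi> j) (x j))
        = cint x j (\<lambda>y. (- poly (w t j) y + \<eta> / 2 * poly (u t j) y ^ 2) * poly (\<phi> j) y)"
    and eq3: "\<forall>t\<in>T. \<forall>j<N. \<forall>\<phi>. in_Vh N k \<phi> \<longrightarrow>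
        \<epsilon> * (- cint x j (\<lambda>y. poly (u t j) y * poly (pderiv (\<phi> j)) y)
                + flux N x \<alpha>2 (u t) j * poly (\<phi> j) (x (Suc j))
                - flux N x \<alpha>2 (u t) (prev_cell N j) * poly (\<phi> j) (x j))
        = cint x j (\<lambda>y. poly (v t j) y * poly (\<phi> j) y)"
    and eq4: "\<forall>t\<in>T. \<forall>j<N. \<forall>\<phi>. in_Vh N k \<phi> \<longrightarrow>
        cint x j (\<lambda>y. poly (ph t j) y * poly (pderiv (\<phi> j)) y)
        - flux N x (- \<alpha>1) (ph t) j * poly (\<phi> j) (x (Suc j))
        + flux N x (- \<alpha>1) (ph t) (prev_cell N j) * poly (\<phi> j) (x j)
        = - cint x j (\<lambda>y. poly (u t j) y * poly (\<phi> j) y)"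
  shows "\<forall>s\<in>T. \<forall>t\<in>T. energy N x \<eta> (u s) (v s) = energy N x \<eta> (u t) (v t)"
proof -
  have energy_deriv: "((\<lambda>s. energy N x \<eta> (u s) (v s)) has_real_derivative 0) (at r within T)"
    if "r \<in> T" "r islimpt T" for r
    by (rule dg_energy_has_derivative_zero[where \<epsilon> = \<epsilon> and \<alpha> = \<alpha>1 and \<beta> = \<alpha>2,
          OF N mesh C1(1-3) _ that])
      (use C1_Vh_in_Vh[OF C1(4)] eq1 eq2 eq3 eq4 in \<open>auto simp: dg_form_def algebra_simps\<close>)
  show ?thesis
  proof (cases "\<exists>a. T = {a}")
    case False
    then have "r islimpt T" if "r \<in> T" for r
      using connected_imp_perfect[OF is_interval_connected[OF T] that] by blast
    then obtain c where "\<forall>t\<in>T. energy N x \<eta> (u t) (v t) = c"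
      using has_field_derivative_zero_constant[OF is_interval_convex[OF T]] energy_deriv by blast
    then show ?thesis by simp
  qed auto
qed

end
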